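(* Let $(\Psi,\vec u,E)$ be a GCD-to-DIV triple in which $\Psi$ has $d$ variables, and let $p\in\mathbb P(\Psi)$. If $\Psi$ has a solution modulo $p$, then it has a solution $\vec b_p\in\mathbb Z^d$ modulo $p$ with $\|\vec b_p\|_\infty\le(d+1)\cdot\|\Psi\|_\infty^3\,p^2$.
   Context: For integers $a\mid b$ means there is a unique $q$ with $b=qa$. A system of divisibility constraints is $\Psi=\bigwedge_{i=1}^m f_i\mid g_i$ with linear integer polynomials $f_i\neq0$, $g_i$. For a prime $p$, $v_p$ is the $p$-adic valuation ($v_p(0)=\infty$); $\vec b$ is a solution of $\Psi$ modulo $p$ if $f_i(\vec b)\ne0$ and $v_p(f_i(\vec b))\le v_p(g_i(\vec b))$ for all $i$. $\mathbb P(\Psi)$ is the set of primes $p$ with $p\le m$ or $p$ dividing some coefficient or constant of some left-hand side $f_i$. $\|\Psi\|_\infty$ is the maximum absolute value of a coefficient or constant of a polynomial in $\Psi$; $\|\vec b\|_\infty$ is the maximum absolute entry. GCD-to-DIV triple: $(\Psi,\vec u,E)$ such that there are $d',m'\in\mathbb N$ and three disjoint families of variables $\vec z,\vec y,\vec w$ with: (1) $\Psi(\vec z,\vec y,\vec w)$ is a system of divisibility constraints in $m'$ variables, $\vec u\in\mathbb Z^{d'}$, $E\in\mathbb Z^{d'\times m'}$, each column of $E$ corresponding to a variable of $\Psi$; (2) each divisibility of $\Psi$ has the form $h(\vec z)\mid f(\vec y)$ or $f(\vec y)\mid g(\vec w)$ with $g$ non-constant, all polynomials have only non-negative coefficients and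 constants, and every left-hand side has a strictly positive constant; (3) each variable $z$ of $\vec z$ appears in a single polynomial of $\Psi$, which has the form $z+c$ with $c$ a positive integer and occurs in exactly two divisibilities (as left-hand side); (4) each variable $w$ of $\vec w$ appears in exactly two polynomials, of the forms $w$ and $w+c$ with $c$ a positive integer, each occurring exactly once in $\Psi$ (as right-hand sides); (5) every column of $E$ corresponding to a variable of $\vec z$ or $\vec w$ is zero. *)

theory Defs
  imports "HOL-Computational_Algebra.Primes"
begin

text \<open>A linear integer polynomial in the variables x_0,...,x_{d-1} is represented by
  the list of its d coefficients together with its constant term.\<close>
type_synonym linpoly = "int list \<times> int"

text \<open>A divisibility f | g; a system is a list of divisibilities.\<close>
type_synonym divsys = "(linpoly \<times> linpoly) list"

definition lp_eval :: "linpoly \<Rightarrow> int list \<Rightarrow> int" where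
  "lp_eval f b = (\<Sum>i<length (fst f). fst f ! i * b ! i) + snd f"

definition lp_vars :: "linpoly \<Rightarrow> nat set" where
  "lp_vars f = {i. i < length (fst f) \<and> fst f ! i \<noteq> 0}"

definition lp_zero :: "linpoly \<Rightarrow> bool" where
  "lp_zero f \<longleftrightarrow> lp_vars f = {} \<and> snd f = 0"

definition lp_var_plus :: "nat \<Rightarrow> nat \<Rightarrow> int \<Rightarrow> linpoly" where
  "lp_var_plus d j c = (map (\<lambda>i. if i = j then 1 else 0) [0..<d], c)"

definition polys_of :: "divsys \<Rightarrow> linpoly list" where
  "polys_of \<Psi> = concat (map (\<lambda>(f,g). [f,g]) \<Psi>)"

definition is_divsys :: "nat \<Rightarrow> divsys \<Rightarrow> bool" where
  "is_divsys d \<Psi> \<longleftrightarrow>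
     (\<forall>(f,g)\<in>set \<Psi>. length (fst f) = d \<and> length (fst g) = d \<and> \<not> lp_zero f)"

text \<open>p-adic valuation condition with v_p(0) = infinity.\<close>
definition vp_le :: "nat \<Rightarrow> int \<Rightarrow> int \<Rightarrow> bool" where
  "vp_le p x y \<longleftrightarrow> y = 0 \<or> (x \<noteq> 0 \<and> multiplicity (int p) x \<le> multiplicity (int p) y)"

definition sol_mod :: "nat \<Rightarrow> divsys \<Rightarrow> int list \<Rightarrow> bool" where
  "sol_mod p \<Psi> b \<longleftrightarrow>
     (\<forall>(f,g)\<in>set \<Psi>. lp_eval f b \<noteq> 0 \<and> vp_le p (lp_eval f b) (lp_eval g b))"

definition primes_of :: "divsys \<Rightarrow> nat set" where
  "primes_of \<Psi> = {p. prime p \<and>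
     (p \<le> length \<Psi> \<or>
      (\<exists>(f,g)\<in>set \<Psi>. \<exists>a\<in>set (fst f) \<union> {snd f}. a \<noteq> 0 \<and> int p dvd a))}"

definition lp_norm :: "linpoly \<Rightarrow> int" where
  "lp_norm f = Max (abs ` (set (fst f) \<union> {snd f}))"

definition sys_norm :: "divsys \<Rightarrow> int" where
  "sys_norm \<Psi> = Max ({0} \<union> lp_norm ` set (polys_of \<Psi>))"

definition vec_norm :: "int list \<Rightarrow> int" where
  "vec_norm b = Max ({0} \<union> abs ` set b)"

definition lp_nonneg :: "linpoly \<Rightarrow> bool" where
  "lp_nonneg f \<longleftrightarrow> (\<forall>a\<in>set (fst f). a \<ge> 0) \<and> snd f \<ge> 0"

text \<open>GCD-to-DIV triple (Psi, u, E) where Psi has d variables (m' = d), u has d' entries,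
  E is a d' x d matrix given as a list of d' rows of length d. Z, Y, W are the index
  sets of the variable families z, y, w.\<close>
definition gcd_to_div_triple :: "nat \<Rightarrow> divsys \<Rightarrow> int list \<Rightarrow> int list list \<Rightarrow> bool" where
  "gcd_to_div_triple d \<Psi> u E \<longleftrightarrow>
   (\<exists>Z Y W.
     \<comment> \<open>(1)\<close>
     Z \<inter> Y = {} \<and> Z \<inter> W = {} \<and> Y \<inter> W = {} \<and> Z \<union> Y \<union> W = {..<d} \<and>
     is_divsys d \<Psi> \<and> length E = length u \<and> (\<forall>r\<in>set E. length r = d) \<and>
     \<comment> \<open>(2)\<close>
     (\<forall>(f,g)\<in>set \<Psi>.
        (lp_vars f \<subseteq> Z \<and> lp_vars g \<subseteq> Y) \<or>
        (lp_vars f \<subseteq> Y \<and> lp_vars g \<subseteq> W \<and> lp_vars g \<noteq> {})) \<and>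
     (\<forall>h\<in>set (polys_of \<Psi>). lp_nonneg h) \<and>
     (\<forall>(f,g)\<in>set \<Psi>. snd f > 0) \<and>
     \<comment> \<open>(3)\<close>
     (\<forall>z\<in>Z. \<exists>c>0.
        {h\<in>set (polys_of \<Psi>). z \<in> lp_vars h} = {lp_var_plus d z c} \<and>
        length (filter (\<lambda>(f,g). f = lp_var_plus d z c) \<Psi>) = 2 \<and>
        (\<forall>(f,g)\<in>set \<Psi>. g \<noteq> lp_var_plus d z c)) \<and>
     \<comment> \<open>(4)\<close>
     (\<forall>w\<in>W. \<exists>c>0.
        {h\<in>set (polys_of \<Psi>). w \<in> lp_vars h} = {lp_var_plus d w 0, lp_var_plus d w c} \<and>
        length (filter (\<lambda>h. h = lp_var_plus d w 0) (polys_of \<Psi>)) = 1 \<and>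
        length (filter (\<lambda>h. h = lp_var_plus d w c) (polys_of \<Psi>)) = 1 \<and>
        (\<forall>(f,g)\<in>set \<Psi>. f \<noteq> lp_var_plus d w 0 \<and> f \<noteq> lp_var_plus d w c)) \<and>
     \<comment> \<open>(5)\<close>
     (\<forall>r\<in>set E. \<forall>j\<in>Z \<union> W. r ! j = 0))"

end

theory Submission
  imports Defs
begin

text \<open>Let \<open>N\<close> be least with \<open>\<parallel>\<Psi>\<parallel> < p^N\<close> and take a solution modulo \<open>p\<close>. Replacing every
  \<open>y\<close>-variable by its residue in \<open>[0, p^N)\<close> changes each polynomial by a multiple of \<open>p^N\<close>, hence
  keeps every \<open>p\<close>-adic valuation below \<open>N\<close>, and in particular the valuations of the positive
  constants of the system. A \<open>z\<close>-variable is set to \<open>1 - c\<close>, so that its polynomial \<open>z + c\<close> is \<open>1\<close>.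
  A \<open>w\<close>-variable is set to \<open>0\<close> or \<open>-c\<close>, making \<open>w\<close> resp. \<open>w + c\<close> vanish; the other one becomes
  \<open>\<plusminus>c\<close>, and since \<open>c = (w + c) - w\<close>, for one of the two choices every left-hand side dividing it
  has valuation at most \<open>v\<^sub>p(c) < N\<close>. All entries are then bounded by \<open>p^N \<le> p \<parallel>\<Psi>\<parallel>\<close>.\<close>

lemma power_dvd_iff_of_power_dvd_diff:
  fixes x x' :: "'a::comm_ring_1"
  assumes "k \<le> N" "P ^ N dvd x - x'"
  shows "P ^ k dvd x \<longleftrightarrow> P ^ k dvd x'"
proof -
  have diff: "P ^ k dvd x - x'"
    using assms by (meson dvd_trans le_imp_power_dvd)
  show ?thesis
  proof
    assume "P ^ k dvd x"
    then have "P ^ k dvd x - (x - x')" using diff by (rule dvd_diff)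
    then show "P ^ k dvd x'" by simp
  next
    assume "P ^ k dvd x'"
    then have "P ^ k dvd x' + (x - x')" using diff by (rule dvd_add)
    then show "P ^ k dvd x" by simp
  qed
qed

lemma multiplicity_eq_of_power_dvd_diff:
  fixes x x' :: "'a::{factorial_semiring, comm_ring_1}"
  assumes "\<not> is_unit P" "x \<noteq> 0" "multiplicity P x < N" "P ^ N dvd x - x'"
  shows "x' \<noteq> 0" "multiplicity P x' = multiplicity P x"
proof -
  let ?e = "multiplicity P x"
  have transfer: "P ^ k dvd x \<longleftrightarrow> P ^ k dvd x'" if "k \<le> Suc ?e" for k
    using power_dvd_iff_of_power_dvd_diff[OF _ assms(4)] that assms(3) by simp
  have "\<not> P ^ Suc ?e dvd x"
    by (subst power_dvd_iff_le_multiplicity[OF assms(2,1)]) simp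
  then have not_dvd: "\<not> P ^ Suc ?e dvd x'"
    using transfer[of "Suc ?e"] by simp
  then show "x' \<noteq> 0" by auto
  show "multiplicity P x' = ?e"
    using multiplicity_eqI[OF _ not_dvd] transfer[of ?e] multiplicity_dvd[of P x] by simp
qed

lemma multiplicity_less_of_less_power:
  fixes P x :: int
  assumes "1 < P" "0 < x" "x < P ^ N"
  shows "multiplicity P x < N"
proof -
  have "P ^ multiplicity P x \<le> x"
    using multiplicity_dvd assms(2) by (rule zdvd_imp_le)
  then have "P ^ multiplicity P x < P ^ N" using assms(3) by simp
  then show ?thesis using assms(1) power_strict_increasing_iff by blast
qed

lemma Least_power_greater:
  fixes P S :: int
  assumes "1 < P" "1 \<le> S"
  defines "N \<equiv> LEAST n. S < P ^ n"
  shows "S < P ^ N" "P ^ N \<le> P * S"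
proof -
  have "int (nat S) < int (2 ^ nat S)"
    by (simp only: of_nat_less_iff less_exp)
  then have "S < 2 ^ nat S" using assms(2) by simp
  also have "\<dots> \<le> P ^ nat S" using assms(1) by (intro power_mono) auto
  finally show gt: "S < P ^ N" unfolding N_def by (rule LeastI)
  then obtain k where k: "N = Suc k"
    using assms(2) by (cases N) auto
  then have "\<not> S < P ^ k" unfolding N_def by (metis lessI not_less_Least)
  then show "P ^ N \<le> P * S" using k assms(1) by simp
qed

lemma lp_eval_diff_dvd:
  assumes "length (fst f) \<le> length b" "length (fst f) \<le> length b'"
    and "\<And>i. i \<in> lp_vars f \<Longrightarrow> M dvd b ! i - b' ! i"
  shows "M dvd lp_eval f b - lp_eval f b'"
proof -
  have "lp_eval f b - lp_eval f b' = (\<Sum>i<length (fst f). fst f ! i * (b ! i - b' ! i))"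
    by (simp add: lp_eval_def sum_subtractf[symmetric] algebra_simps)
  also have "M dvd \<dots>"
  proof (rule dvd_sum)
    fix i assume "i \<in> {..<length (fst f)}"
    then show "M dvd fst f ! i * (b ! i - b' ! i)"
      using assms(3)[of i] by (cases "fst f ! i = 0") (auto simp: lp_vars_def)
  qed
  finally show ?thesis .
qed

lemma lp_eval_cong:
  assumes "\<And>i. i \<in> lp_vars f \<Longrightarrow> b ! i = b' ! i"
  shows "lp_eval f b = lp_eval f b'"
proof -
  have "fst f ! i * b ! i = fst f ! i * b' ! i" if "i \<in> {..<length (fst f)}" for i
    using assms[of i] that by (cases "fst f ! i = 0") (auto simp: lp_vars_def)
  then have "(\<Sum>i<length (fst f). fst f ! i * b ! i) = (\<Sum>i<length (fst f). fst f ! i * b' ! i)"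
    by (rule sum.cong[OF refl])
  then show ?thesis by (simp add: lp_eval_def)
qed

lemma lp_eval_no_vars:
  assumes "lp_vars f = {}"
  shows "lp_eval f b = snd f"
  unfolding lp_eval_def using assms by (auto simp: lp_vars_def intro!: sum.neutral)

lemma lp_eval_ge_const:
  assumes "lp_nonneg f" "\<And>i. i \<in> lp_vars f \<Longrightarrow> b ! i \<ge> 0"
  shows "lp_eval f b \<ge> snd f"
proof -
  have "fst f ! i * b ! i \<ge> 0" if "i < length (fst f)" for i
    using assms that by (cases "fst f ! i = 0") (auto simp: lp_nonneg_def lp_vars_def)
  then show ?thesis by (auto simp: lp_eval_def intro!: sum_nonneg)
qed

lemma lp_eval_var_plus:
  assumes "j < d"
  shows "lp_eval (lp_var_plus d j c) b = b ! j + c"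
proof -
  have "(\<Sum>i<d. map (\<lambda>i. if i = j then 1 else 0) [0..<d] ! i * b ! i) = (\<Sum>i<d. if i = j then b ! j else 0)"
    by (rule sum.cong) auto
  with assms show ?thesis by (simp add: lp_eval_def lp_var_plus_def)
qed

lemma set_polys_of: "set (polys_of \<Psi>) = fst ` set \<Psi> \<union> snd ` set \<Psi>"
  by (induction \<Psi>) (auto simp: polys_of_def)

lemma constraint_in_polys_of:
  assumes "(f, g) \<in> set \<Psi>"
  shows "f \<in> set (polys_of \<Psi>)" "g \<in> set (polys_of \<Psi>)"
  using assms by (force simp: set_polys_of)+

lemma abs_const_le_sys_norm: "h \<in> set (polys_of \<Psi>) \<Longrightarrow> \<bar>snd h\<bar> \<le> sys_norm \<Psi>"
proof -
  assume h: "h \<in> set (polys_of \<Psi>)"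
  have "\<bar>snd h\<bar> \<le> lp_norm h" unfolding lp_norm_def by (rule Max_ge) auto
  also have "lp_norm h \<le> sys_norm \<Psi>" unfolding sys_norm_def by (rule Max_ge) (use h in auto)
  finally show ?thesis .
qed

lemma vec_norm_le: "B \<ge> 0 \<Longrightarrow> (\<And>x. x \<in> set b \<Longrightarrow> \<bar>x\<bar> \<le> B) \<Longrightarrow> vec_norm b \<le> B"
  unfolding vec_norm_def by (subst Max_le_iff) auto

lemma vp_le_iff_power_dvd:
  assumes "prime p" "x \<noteq> 0"
  shows "vp_le p x y \<longleftrightarrow> int p ^ multiplicity (int p) x dvd y"
proof (cases "y = 0")
  case False
  have "\<not> is_unit (int p)" using prime_gt_1_nat[OF assms(1)] by simp
  with False assms(2) show ?thesis by (simp add: vp_le_def power_dvd_iff_le_multiplicity)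
qed (simp add: vp_le_def)

lemma sol_mod_iff_power_dvd:
  assumes "prime p"
  shows "sol_mod p \<Psi> b \<longleftrightarrow> (\<forall>(f, g)\<in>set \<Psi>. lp_eval f b \<noteq> 0 \<and>
           int p ^ multiplicity (int p) (lp_eval f b) dvd lp_eval g b)"
  using vp_le_iff_power_dvd[OF assms] by (auto simp: sol_mod_def)

locale gcd_to_div_system =
  fixes d :: nat and \<Psi> :: divsys and Z Y W :: "nat set" and cZ cW :: "nat \<Rightarrow> int"
  assumes disjoint: "Z \<inter> Y = {}" "Z \<inter> W = {}" "Y \<inter> W = {}"
    and variables: "Z \<union> Y \<union> W = {..<d}"
    and divsys: "is_divsys d \<Psi>"
    and constraint_shape: "\<And>f g. (f, g) \<in> set \<Psi> \<Longrightarrow>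
          lp_vars f \<subseteq> Z \<and> lp_vars g \<subseteq> Y \<or> lp_vars f \<subseteq> Y \<and> lp_vars g \<subseteq> W \<and> lp_vars g \<noteq> {}"
    and nonneg: "\<And>h. h \<in> set (polys_of \<Psi>) \<Longrightarrow> lp_nonneg h"
    and lhs_const_pos: "\<And>f g. (f, g) \<in> set \<Psi> \<Longrightarrow> snd f > 0"
    and Z_const_pos: "\<And>z. z \<in> Z \<Longrightarrow> cZ z > 0"
    and polys_with_Z_var: "\<And>z. z \<in> Z \<Longrightarrow>
          {h \<in> set (polys_of \<Psi>). z \<in> lp_vars h} = {lp_var_plus d z (cZ z)}"
    and W_const_pos: "\<And>w. w \<in> W \<Longrightarrow> cW w > 0"
    and polys_with_W_var: "\<And>w. w \<in> W \<Longrightarrow>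
          {h \<in> set (polys_of \<Psi>). w \<in> lp_vars h} = {lp_var_plus d w 0, lp_var_plus d w (cW w)}"

lemma gcd_to_div_triple_imp_system:
  assumes "gcd_to_div_triple d \<Psi> u E"
  obtains Z Y W cZ cW where "gcd_to_div_system d \<Psi> Z Y W cZ cW"
  using assms unfolding gcd_to_div_triple_def
proof (elim exE conjE)
  fix Z Y W
  assume partition: "Z \<inter> Y = {}" "Z \<inter> W = {}" "Y \<inter> W = {}" "Z \<union> Y \<union> W = {..<d}"
    and divsys: "is_divsys d \<Psi>"
    and shape: "\<forall>(f,g)\<in>set \<Psi>.
        (lp_vars f \<subseteq> Z \<and> lp_vars g \<subseteq> Y) \<or>
        (lp_vars f \<subseteq> Y \<and> lp_vars g \<subseteq> W \<and> lp_vars g \<noteq> {})"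
    and nonneg: "\<forall>h\<in>set (polys_of \<Psi>). lp_nonneg h"
    and pos: "\<forall>(f,g)\<in>set \<Psi>. snd f > 0"
    and Z_vars: "\<forall>z\<in>Z. \<exists>c>0.
        {h\<in>set (polys_of \<Psi>). z \<in> lp_vars h} = {lp_var_plus d z c} \<and>
        length (filter (\<lambda>(f,g). f = lp_var_plus d z c) \<Psi>) = 2 \<and>
        (\<forall>(f,g)\<in>set \<Psi>. g \<noteq> lp_var_plus d z c)"
    and W_vars: "\<forall>w\<in>W. \<exists>c>0.
        {h\<in>set (polys_of \<Psi>). w \<in> lp_vars h} = {lp_var_plus d w 0, lp_var_plus d w c} \<and>
        length (filter (\<lambda>h. h = lp_var_plus d w 0) (polys_of \<Psi>)) = 1 \<and>
        length (filter (\<lambda>h. h = lp_var_plus d w c) (polys_of \<Psi>)) = 1 \<and>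
        (\<forall>(f,g)\<in>set \<Psi>. f \<noteq> lp_var_plus d w 0 \<and> f \<noteq> lp_var_plus d w c)"
  obtain cZ where cZ: "\<forall>z\<in>Z. cZ z > 0 \<and>
      {h\<in>set (polys_of \<Psi>). z \<in> lp_vars h} = {lp_var_plus d z (cZ z)}"
    using bchoice[OF Z_vars] by auto
  obtain cW where cW: "\<forall>w\<in>W. cW w > 0 \<and>
      {h\<in>set (polys_of \<Psi>). w \<in> lp_vars h} = {lp_var_plus d w 0, lp_var_plus d w (cW w)}"
    using bchoice[OF W_vars] by auto
  have "gcd_to_div_system d \<Psi> Z Y W cZ cW"
    by unfold_locales (use partition divsys shape nonneg pos cZ cW in auto)
  then show thesis by (rule that)
qed

context gcd_to_div_system
begin

lemma var_less_d: "i \<in> Z \<or> i \<in> Y \<or> i \<in> W \<Longrightarrow> i < d"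
  using variables by blast

lemma poly_length: "h \<in> set (polys_of \<Psi>) \<Longrightarrow> length (fst h) = d"
  using divsys by (auto simp: set_polys_of is_divsys_def)

lemma poly_with_Z_var:
  "h \<in> set (polys_of \<Psi>) \<Longrightarrow> z \<in> Z \<Longrightarrow> z \<in> lp_vars h \<Longrightarrow> h = lp_var_plus d z (cZ z)"
  using polys_with_Z_var by blast

lemma poly_with_W_var:
  "h \<in> set (polys_of \<Psi>) \<Longrightarrow> w \<in> W \<Longrightarrow> w \<in> lp_vars h \<Longrightarrow>
     h = lp_var_plus d w 0 \<or> h = lp_var_plus d w (cW w)"
  using polys_with_W_var by blast

lemma Z_const_le_sys_norm:
  assumes "z \<in> Z"
  shows "cZ z \<le> sys_norm \<Psi>"
proof -
  have "lp_var_plus d z (cZ z) \<in> set (polys_of \<Psi>)"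
    using polys_with_Z_var[OF assms] by blast
  from abs_const_le_sys_norm[OF this] show ?thesis by (simp add: lp_var_plus_def)
qed

lemma W_const_le_sys_norm:
  assumes "w \<in> W"
  shows "cW w \<le> sys_norm \<Psi>"
proof -
  have "lp_var_plus d w (cW w) \<in> set (polys_of \<Psi>)"
    using polys_with_W_var[OF assms] by blast
  from abs_const_le_sys_norm[OF this] show ?thesis by (simp add: lp_var_plus_def)
qed

lemma sys_norm_ge_1: "\<Psi> \<noteq> [] \<Longrightarrow> 1 \<le> sys_norm \<Psi>"
proof -
  assume "\<Psi> \<noteq> []"
  then obtain f g where fg: "(f, g) \<in> set \<Psi>"
    by (metis list.set_sel(1) surj_pair)
  then have "\<bar>snd f\<bar> \<le> sys_norm \<Psi>"
    by (intro abs_const_le_sys_norm constraint_in_polys_of)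
  with lhs_const_pos[OF fg] show ?thesis by linarith
qed

end

locale gcd_to_div_solution = gcd_to_div_system +
  fixes p :: nat and b :: "int list"
  assumes prime: "prime p" and nonempty: "\<Psi> \<noteq> []"
    and length_b: "length b = d" and solution: "sol_mod p \<Psi> b"
begin

definition N :: nat where "N = (LEAST n. sys_norm \<Psi> < int p ^ n)"

definition b_red :: "int list" where "b_red = map (\<lambda>i. b ! i mod int p ^ N) [0..<d]"

definition W_to_zero :: "nat \<Rightarrow> bool" where
  "W_to_zero w \<longleftrightarrow> (\<forall>(f, g)\<in>set \<Psi>. g = lp_var_plus d w (cW w) \<longrightarrow>
     int p ^ multiplicity (int p) (lp_eval f b_red) dvd cW w)"

definition small_solution :: "int list" where
  "small_solution = map (\<lambda>i. if i \<in> Z then 1 - cZ i else if i \<in> Y then b_red ! i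
     else if W_to_zero i then 0 else - cW i) [0..<d]"

lemma p_gt_1: "1 < int p"
  using prime_gt_1_nat[OF prime] by simp

lemma sys_norm_less_power: "sys_norm \<Psi> < int p ^ N"
  and power_le_p_sys_norm: "int p ^ N \<le> int p * sys_norm \<Psi>"
  using Least_power_greater[OF p_gt_1 sys_norm_ge_1[OF nonempty]] by (simp_all add: N_def)

lemma multiplicity_less_N: "0 < c \<Longrightarrow> c \<le> sys_norm \<Psi> \<Longrightarrow> multiplicity (int p) c < N"
  using multiplicity_less_of_less_power[OF p_gt_1] sys_norm_less_power by fastforce

lemma solution_power_dvd:
  "(f, g) \<in> set \<Psi> \<Longrightarrow>
     lp_eval f b \<noteq> 0 \<and> int p ^ multiplicity (int p) (lp_eval f b) dvd lp_eval g b"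
  using solution by (auto simp: sol_mod_iff_power_dvd[OF prime])

lemma b_red_nonneg: "i < d \<Longrightarrow> 0 \<le> b_red ! i"
  and b_red_less: "i < d \<Longrightarrow> b_red ! i < int p ^ N"
  using p_gt_1 by (simp_all add: b_red_def)

lemma lp_eval_b_red_cong:
  assumes "h \<in> set (polys_of \<Psi>)"
  shows "int p ^ N dvd lp_eval h b - lp_eval h b_red"
proof (rule lp_eval_diff_dvd)
  show "length (fst h) \<le> length b" "length (fst h) \<le> length b_red"
    using poly_length[OF assms] length_b by (simp_all add: b_red_def)
  fix i assume "i \<in> lp_vars h"
  then have "i < d" using poly_length[OF assms] by (simp add: lp_vars_def)
  then show "int p ^ N dvd b ! i - b_red ! i"
    by (simp add: b_red_def mod_eq_dvd_iff[symmetric])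
qed

lemma lhs_power_dvd_b_red:
  assumes fg: "(f, g) \<in> set \<Psi>" and dvd: "int p ^ multiplicity (int p) (lp_eval f b) dvd c"
    and "0 < c" "c \<le> sys_norm \<Psi>"
  shows "int p ^ multiplicity (int p) (lp_eval f b_red) dvd c"
proof -
  have "multiplicity (int p) (lp_eval f b) \<le> multiplicity (int p) c"
    using dvd \<open>0 < c\<close> p_gt_1 by (simp add: power_dvd_iff_le_multiplicity)
  then have "multiplicity (int p) (lp_eval f b) < N"
    using multiplicity_less_N \<open>0 < c\<close> \<open>c \<le> sys_norm \<Psi>\<close> by (meson le_less_trans)
  then have "multiplicity (int p) (lp_eval f b_red) = multiplicity (int p) (lp_eval f b)"
    using multiplicity_eq_of_power_dvd_diff(2)[OF _ _ _ lp_eval_b_red_cong[OF constraint_in_polys_of(1)[OF fg]]]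
      p_gt_1 solution_power_dvd[OF fg] by auto
  with dvd show ?thesis by simp
qed

lemma W_lhs_power_dvd_const:
  assumes "w \<in> W" and fg1: "(f1, lp_var_plus d w 0) \<in> set \<Psi>"
    and fg2: "(f2, lp_var_plus d w (cW w)) \<in> set \<Psi>"
  shows "int p ^ multiplicity (int p) (lp_eval f1 b_red) dvd cW w \<or>
         int p ^ multiplicity (int p) (lp_eval f2 b_red) dvd cW w"
proof -
  let ?e1 = "multiplicity (int p) (lp_eval f1 b)" and ?e2 = "multiplicity (int p) (lp_eval f2 b)"
  have "w < d" using var_less_d assms(1) by blast
  then have dvd1: "int p ^ ?e1 dvd b ! w" and dvd2: "int p ^ ?e2 dvd b ! w + cW w"
    using solution_power_dvd[OF fg1] solution_power_dvd[OF fg2] by (simp_all add: lp_eval_var_plus)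
  have "int p ^ ?e1 dvd cW w \<or> int p ^ ?e2 dvd cW w"
    \<comment> \<open>the smaller of the two powers divides \<open>(b ! w + cW w) - b ! w\<close>\<close>
  proof (cases "?e1 \<le> ?e2")
    case True
    then have "int p ^ ?e1 dvd b ! w + cW w" using dvd2 by (meson dvd_trans le_imp_power_dvd)
    with dvd1 show ?thesis by (metis add_diff_cancel_left' dvd_diff)
  next
    case False
    then have "int p ^ ?e2 dvd b ! w" using dvd1 by (meson dvd_trans le_imp_power_dvd nat_le_linear)
    with dvd2 show ?thesis by (metis add_diff_cancel_left' dvd_diff)
  qed
  then show ?thesis
    using lhs_power_dvd_b_red[OF fg1] lhs_power_dvd_b_red[OF fg2]
      W_const_pos[OF assms(1)] W_const_le_sys_norm[OF assms(1)] by blast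
qed

lemma length_small_solution: "length small_solution = d"
  by (simp add: small_solution_def)

lemma small_solution_Z: "z \<in> Z \<Longrightarrow> small_solution ! z = 1 - cZ z"
  using var_less_d[of z] by (simp add: small_solution_def)

lemma small_solution_Y: "y \<in> Y \<Longrightarrow> small_solution ! y = b_red ! y"
  using var_less_d[of y] disjoint by (auto simp: small_solution_def)

lemma small_solution_W: "w \<in> W \<Longrightarrow> small_solution ! w = (if W_to_zero w then 0 else - cW w)"
  using var_less_d[of w] disjoint by (auto simp: small_solution_def)

lemma lp_eval_small_solution_Y: "lp_vars h \<subseteq> Y \<Longrightarrow> lp_eval h small_solution = lp_eval h b_red"
  using small_solution_Y by (auto intro: lp_eval_cong)

lemma small_solution_ZY_constraint:
  assumes fg: "(f, g) \<in> set \<Psi>" and f_Z: "lp_vars f \<subseteq> Z" and g_Y: "lp_vars g \<subseteq> Y"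
  shows "lp_eval f small_solution \<noteq> 0 \<and>
    int p ^ multiplicity (int p) (lp_eval f small_solution) dvd lp_eval g small_solution"
proof (cases "lp_vars f = {}")
  case True
  then have f_val: "lp_eval f small_solution = snd f" "lp_eval f b = snd f"
    by (simp_all add: lp_eval_no_vars)
  have "snd f \<le> sys_norm \<Psi>"
    using abs_const_le_sys_norm[OF constraint_in_polys_of(1)[OF fg]] by (simp add: abs_le_iff)
  then have "multiplicity (int p) (snd f) \<le> N"
    using multiplicity_less_N lhs_const_pos[OF fg] by (simp add: less_imp_le)
  then have "int p ^ multiplicity (int p) (snd f) dvd lp_eval g b \<longleftrightarrow>
      int p ^ multiplicity (int p) (snd f) dvd lp_eval g b_red"
    by (rule power_dvd_iff_of_power_dvd_diff[OF _ lp_eval_b_red_cong[OF constraint_in_polys_of(2)[OF fg]]])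
  then show ?thesis
    using f_val solution_power_dvd[OF fg] lp_eval_small_solution_Y[OF g_Y] by simp
next
  case False
  then obtain z where "z \<in> lp_vars f" by blast
  with f_Z have "z \<in> Z" by blast
  with \<open>z \<in> lp_vars f\<close> have "f = lp_var_plus d z (cZ z)"
    using poly_with_Z_var[OF constraint_in_polys_of(1)[OF fg]] by blast
  with \<open>z \<in> Z\<close> have "lp_eval f small_solution = 1"
    using small_solution_Z var_less_d by (simp add: lp_eval_var_plus)
  then show ?thesis by simp
qed

lemma small_solution_YW_constraint:
  assumes fg: "(f, g) \<in> set \<Psi>" and f_Y: "lp_vars f \<subseteq> Y"
    and g_W: "lp_vars g \<subseteq> W" "lp_vars g \<noteq> {}"
  shows "lp_eval f small_solution \<noteq> 0 \<and>
    int p ^ multiplicity (int p) (lp_eval f small_solution) dvd lp_eval g small_solution"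
proof -
  have "lp_eval f b_red \<ge> snd f"
    using nonneg[OF constraint_in_polys_of(1)[OF fg]] f_Y b_red_nonneg var_less_d
    by (intro lp_eval_ge_const) auto
  then have f_pos: "lp_eval f b_red > 0" using lhs_const_pos[OF fg] by simp
  obtain w where "w \<in> lp_vars g" and w: "w \<in> W" using g_W by blast
  then consider (var) "g = lp_var_plus d w 0" | (shift) "g = lp_var_plus d w (cW w)"
    using poly_with_W_var[OF constraint_in_polys_of(2)[OF fg] w] by blast
  then have "int p ^ multiplicity (int p) (lp_eval f b_red) dvd lp_eval g small_solution"
  proof cases
    case var
    show ?thesis
    proof (cases "W_to_zero w")
      case False
      then obtain f2 where "(f2, lp_var_plus d w (cW w)) \<in> set \<Psi>"
        and "\<not> int p ^ multiplicity (int p) (lp_eval f2 b_red) dvd cW w"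
        unfolding W_to_zero_def by blast
      then have "int p ^ multiplicity (int p) (lp_eval f b_red) dvd cW w"
        using W_lhs_power_dvd_const[OF w] fg var by blast
      with False show ?thesis
        using var w small_solution_W var_less_d by (simp add: lp_eval_var_plus)
    qed (use var w small_solution_W var_less_d in \<open>simp add: lp_eval_var_plus\<close>)
  next
    case shift
    show ?thesis
    proof (cases "W_to_zero w")
      case True
      then have "int p ^ multiplicity (int p) (lp_eval f b_red) dvd cW w"
        using fg shift by (auto simp: W_to_zero_def)
      with True show ?thesis
        using shift w small_solution_W var_less_d by (simp add: lp_eval_var_plus)
    qed (use shift w small_solution_W var_less_d in \<open>simp add: lp_eval_var_plus\<close>)
  qed
  with f_pos show ?thesis using lp_eval_small_solution_Y[OF f_Y] by simp
qed

lemma sol_mod_small_solution: "sol_mod p \<Psi> small_solution"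
  unfolding sol_mod_iff_power_dvd[OF prime]
  using constraint_shape small_solution_ZY_constraint small_solution_YW_constraint by fast

lemma vec_norm_small_solution: "vec_norm small_solution \<le> int p * sys_norm \<Psi>"
proof (rule vec_norm_le)
  have norm: "1 \<le> sys_norm \<Psi>" "sys_norm \<Psi> \<le> int p * sys_norm \<Psi>"
    using sys_norm_ge_1[OF nonempty] p_gt_1 by simp_all
  then show "0 \<le> int p * sys_norm \<Psi>" by simp
  fix x assume "x \<in> set small_solution"
  then obtain i where i: "i < d" "x = small_solution ! i"
    by (auto simp: in_set_conv_nth length_small_solution)
  then consider "i \<in> Z" | "i \<in> Y" | "i \<in> W" using variables by blast
  then show "\<bar>x\<bar> \<le> int p * sys_norm \<Psi>"
  proof cases
    case 1
    then have "x = 1 - cZ i" "0 < cZ i" "cZ i \<le> sys_norm \<Psi>"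
      using i small_solution_Z Z_const_pos Z_const_le_sys_norm by simp_all
    then show ?thesis using norm by arith
  next
    case 2
    then show ?thesis using i small_solution_Y b_red_nonneg b_red_less power_le_p_sys_norm by force
  next
    case 3
    then have "x = 0 \<or> x = - cW i" "0 < cW i" "cW i \<le> sys_norm \<Psi>"
      using i small_solution_W W_const_pos W_const_le_sys_norm by simp_all
    then show ?thesis using norm by arith
  qed
qed

end

theorem mainTheorem17:
  fixes d :: nat and \<Psi> :: divsys and u :: "int list" and E :: "int list list" and p :: nat
  assumes "gcd_to_div_triple d \<Psi> u E"
    and "p \<in> primes_of \<Psi>"
    and "\<exists>b. length b = d \<and> sol_mod p \<Psi> b"
  shows "\<exists>b. length b = d \<and> sol_mod p \<Psi> b \<and>
           vec_norm b \<le> (int d + 1) * sys_norm \<Psi> ^ 3 * int p ^ 2"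
proof -
  obtain Z Y W cZ cW where "gcd_to_div_system d \<Psi> Z Y W cZ cW"
    using gcd_to_div_triple_imp_system[OF assms(1)] by blast
  moreover have "prime p" "\<Psi> \<noteq> []"
    using assms(2) prime_gt_1_nat[of p] by (auto simp: primes_of_def)
  moreover obtain b where "length b = d" "sol_mod p \<Psi> b"
    using assms(3) by blast
  ultimately interpret gcd_to_div_solution d \<Psi> Z Y W cZ cW p b
    by (simp add: gcd_to_div_solution_def gcd_to_div_solution_axioms_def)
  have "int p * sys_norm \<Psi> \<le> int p ^ 2 * sys_norm \<Psi> ^ 3"
    using p_gt_1 sys_norm_ge_1[OF nonempty] by (intro mult_mono self_le_power) auto
  also have "\<dots> \<le> (int d + 1) * sys_norm \<Psi> ^ 3 * int p ^ 2"
    using p_gt_1 sys_norm_ge_1[OF nonempty] by (simp add: algebra_simps)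
  finally have bound: "int p * sys_norm \<Psi> \<le> (int d + 1) * sys_norm \<Psi> ^ 3 * int p ^ 2" .
  show ?thesis
    using length_small_solution sol_mod_small_solution vec_norm_small_solution bound by force
qed

end
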